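(* Let $(G,<)$ be an ordered group and let $x,y\in G$ be distinct elements with $1<x$ and $1<y$ such that the submonoid of $G$ generated by $x$ and $y$ is the free monoid on $\{x,y\}$. Let $k$ be a field. Then the $k$-subalgebra of the group algebra $k[G]$ generated by $x+x^{-1}$ and $y+y^{-1}$ is the free $k$-algebra on $\{x+x^{-1},y+y^{-1}\}$.
   Context: An ordered group is a group with a total order $<$ such that $a<b$ implies $ca<cb$ and $ac<bc$ for all $a,b,c$. The free $k$-algebra on a set $X$ is the algebra of noncommutative polynomials in the variables $X$. *)

theory Defs
  imports Main
begin

text \<open>The group G is a type of class group_add (a possibly non-commutative group,
written additively: 0 is the identity, u + v the product, - u the inverse).
Elements of the group algebra k[G] are finitely supported functions G \<Rightarrow> k.\<close>

definition ordered_group :: "'g::{group_add,linorder} itself \<Rightarrow> bool" where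
  "ordered_group _ \<longleftrightarrow>
     (\<forall>a b c :: 'g. a < b \<longrightarrow> c + a < c + b \<and> a + c < b + c)"

definition word_val :: "'g::group_add \<Rightarrow> 'g \<Rightarrow> bool list \<Rightarrow> 'g" where
  "word_val x y w = foldr (\<lambda>c acc. (if c then x else y) + acc) w 0"

definition free_submonoid2 :: "'g::group_add \<Rightarrow> 'g \<Rightarrow> bool" where
  "free_submonoid2 x y \<longleftrightarrow> x \<noteq> y \<and> inj (word_val x y)"

definition supp :: "('a \<Rightarrow> 'k::zero) \<Rightarrow> 'a set" where
  "supp f = {u. f u \<noteq> 0}"

definition gdelta :: "'g \<Rightarrow> 'g \<Rightarrow> 'k::zero_neq_one" where
  "gdelta g = (\<lambda>z. if z = g then 1 else 0)"

definition gadd :: "('g \<Rightarrow> 'k::field) \<Rightarrow> ('g \<Rightarrow> 'k) \<Rightarrow> 'g \<Rightarrow> 'k" where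
  "gadd f h = (\<lambda>z. f z + h z)"

definition gmult :: "('g::group_add \<Rightarrow> 'k::field) \<Rightarrow> ('g \<Rightarrow> 'k) \<Rightarrow> 'g \<Rightarrow> 'k" where
  "gmult f h = (\<lambda>z. \<Sum>u\<in>supp f. f u * h (- u + z))"

definition alg_word :: "('g::group_add \<Rightarrow> 'k::field) \<Rightarrow> ('g \<Rightarrow> 'k) \<Rightarrow> bool list \<Rightarrow> 'g \<Rightarrow> 'k" where
  "alg_word a b w = foldr (\<lambda>c acc. gmult (if c then a else b) acc) w (gdelta 0)"

text \<open>Noncommutative polynomials k<X,Y>: finitely supported coefficient functions on
words. Evaluation homomorphism at (a,b).\<close>
definition alg_eval :: "('g::group_add \<Rightarrow> 'k::field) \<Rightarrow> ('g \<Rightarrow> 'k) \<Rightarrow> (bool list \<Rightarrow> 'k) \<Rightarrow> 'g \<Rightarrow> 'k" where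
  "alg_eval a b p = (\<lambda>z. \<Sum>w\<in>supp p. p w * alg_word a b w z)"

text \<open>The subalgebra generated by a and b is free on {a,b}: the evaluation map from
the free algebra k<X,Y> onto it is injective (it is surjective by construction).\<close>
definition free_subalgebra2 :: "('g::group_add \<Rightarrow> 'k::field) \<Rightarrow> ('g \<Rightarrow> 'k) \<Rightarrow> bool" where
  "free_subalgebra2 a b \<longleftrightarrow>
     (\<forall>p q :: bool list \<Rightarrow> 'k. finite (supp p) \<longrightarrow> finite (supp q) \<longrightarrow>
        alg_eval a b p = alg_eval a b q \<longrightarrow> p = q)"

end

theory Submission
  imports Defs
begin

text \<open>Since x and y are positive and the order is translation invariant, the largest element
of the support of gdelta x + gdelta (- x) is x, and the image in k[G] of a word in the two
generators has largest support element the value of that word in G, with coefficient 1.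
Freeness of the submonoid makes these values pairwise distinct, so in a nontrivial linear
combination of word images the largest such value among words with nonzero coefficient
cannot cancel.\<close>

lemma ordered_group_add_left_mono:
  fixes a b c :: "'g::{group_add,linorder}"
  assumes "ordered_group TYPE('g)" and "a \<le> b"
  shows "c + a \<le> c + b"
  using assms unfolding ordered_group_def by (metis less_le order_refl)

lemma ordered_group_pos_shift:
  fixes g v :: "'g::{group_add,linorder}"
  assumes og: "ordered_group TYPE('g)" and "0 < g"
  shows "v < g + v" and "- g + v < v"
proof -
  show "v < g + v"
    using assms unfolding ordered_group_def by (metis add_0)
  have "- g + 0 < - g + g"
    using assms unfolding ordered_group_def by blast
  then have "- g < 0" by simp
  then show "- g + v < v"
    using og unfolding ordered_group_def by (metis add_0)
qed

lemma gmult_gdelta_sym: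
  fixes g :: "'g::group_add" and f :: "'g \<Rightarrow> 'k::field"
  assumes "g \<noteq> - g"
  shows "gmult (gadd (gdelta g) (gdelta (- g))) f z = f (- g + z) + f (g + z)"
proof -
  have "supp (gadd (gdelta g) (gdelta (- g)) :: 'g \<Rightarrow> 'k) = {g, - g}"
    using assms by (auto simp: supp_def gadd_def gdelta_def)
  then show ?thesis
    using assms unfolding gmult_def by (simp add: gadd_def gdelta_def add.commute)
qed

lemma gmult_gdelta_sym_leading:
  fixes g t :: "'g::{group_add,linorder}" and f :: "'g \<Rightarrow> 'k::field"
  assumes og: "ordered_group TYPE('g)" and g: "0 < g"
    and supp_f: "supp f \<subseteq> {..t}"
  defines "h \<equiv> gmult (gadd (gdelta g) (gdelta (- g))) f"
  shows "h (g + t) = f t" and "supp h \<subseteq> {..g + t}"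
proof -
  have "g \<noteq> - g"
    using ordered_group_pos_shift(2)[OF og g, of 0] g by auto
  then have h: "h z = f (- g + z) + f (g + z)" for z
    unfolding h_def by (rule gmult_gdelta_sym)
  have "t < g + (g + t)"
    using ordered_group_pos_shift(1)[OF og g] by (blast intro: less_trans)
  then have "f (g + (g + t)) = 0"
    using supp_f by (auto simp: supp_def)
  then show "h (g + t) = f t"
    by (simp add: h add.assoc[symmetric])
  show "supp h \<subseteq> {..g + t}"
  proof
    fix z assume "z \<in> supp h"
    then consider "- g + z \<in> supp f" | "g + z \<in> supp f"
      by (force simp: supp_def h)
    then show "z \<in> {..g + t}"
    proof cases
      case 1
      then have "g + (- g + z) \<le> g + t"
        using supp_f ordered_group_add_left_mono[OF og] by blast
      then show ?thesis by (simp add: add.assoc[symmetric])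
    next
      case 2
      then have "- g + (g + z) \<le> - g + t"
        using supp_f ordered_group_add_left_mono[OF og] by blast
      also have "\<dots> < g + t"
        using ordered_group_pos_shift[OF og g, of t] by simp
      finally show ?thesis by (simp add: add.assoc[symmetric])
    qed
  qed
qed

lemma alg_word_sym_leading:
  fixes x y :: "'g::{group_add,linorder}"
  assumes og: "ordered_group TYPE('g)" and "0 < x" and "0 < y"
  defines "A \<equiv> alg_word (gadd (gdelta x) (gdelta (- x)) :: 'g \<Rightarrow> 'k::field)
                 (gadd (gdelta y) (gdelta (- y)))"
  shows "A w (word_val x y w) = 1 \<and> supp (A w) \<subseteq> {..word_val x y w}"
proof (induction w)
  case Nil
  then show ?case
    by (auto simp: A_def alg_word_def word_val_def gdelta_def supp_def)
next
  case (Cons c w)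
  define g where "g = (if c then x else y)"
  have "0 < g"
    using assms by (simp add: g_def)
  moreover have "A (c # w) = gmult (gadd (gdelta g) (gdelta (- g))) (A w)"
    by (simp add: A_def alg_word_def g_def)
  moreover have "word_val x y (c # w) = g + word_val x y w"
    by (simp add: word_val_def g_def)
  ultimately show ?case
    using Cons.IH gmult_gdelta_sym_leading[OF og \<open>0 < g\<close>, of "A w"] by simp
qed

lemma leading_terms_linear_independent:
  fixes A :: "'w \<Rightarrow> 'g::linorder \<Rightarrow> 'k::field" and \<tau> :: "'w \<Rightarrow> 'g"
  assumes fin: "finite S" and inj: "inj_on \<tau> S"
    and lead: "\<And>w. w \<in> S \<Longrightarrow> A w (\<tau> w) \<noteq> 0"
    and supp_A: "\<And>w. w \<in> S \<Longrightarrow> supp (A w) \<subseteq> {..\<tau> w}"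
    and zero: "\<And>z. (\<Sum>w\<in>S. c w * A w z) = 0"
    and "w \<in> S"
  shows "c w = 0"
proof (rule ccontr)
  define D where "D = {w \<in> S. c w \<noteq> 0}"
  assume "c w \<noteq> 0"
  with \<open>w \<in> S\<close> have "D \<noteq> {}" by (auto simp: D_def)
  moreover have "finite D"
    using fin by (simp add: D_def)
  ultimately have "Max (\<tau> ` D) \<in> \<tau> ` D" by simp
  then obtain w0 where "w0 \<in> D" and w0_Max: "\<tau> w0 = Max (\<tau> ` D)" by auto
  have w0_max: "\<tau> v \<le> \<tau> w0" if "v \<in> D" for v
    using \<open>finite D\<close> that by (simp add: w0_Max)
  from \<open>w0 \<in> D\<close> have w0: "w0 \<in> S" "c w0 \<noteq> 0" by (auto simp: D_def)
  have "c v * A v (\<tau> w0) = 0" if "v \<in> S - {w0}" for v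
  proof (cases "v \<in> D")
    case True
    have "\<tau> v \<noteq> \<tau> w0"
      using inj w0(1) that by (auto dest: inj_onD)
    with w0_max True have "\<tau> v < \<tau> w0" by (simp add: order_less_le)
    then have "\<tau> w0 \<notin> supp (A v)"
      using supp_A[of v] that by auto
    then show ?thesis by (simp add: supp_def)
  qed (use that in \<open>simp add: D_def\<close>)
  then have "(\<Sum>v\<in>S. c v * A v (\<tau> w0)) = c w0 * A w0 (\<tau> w0)"
    by (simp add: sum.remove[OF fin w0(1)] sum.neutral)
  then show False
    using zero w0 lead by simp
qed

lemma alg_eval_eq_sum:
  assumes "finite S" and "supp p \<subseteq> S"
  shows "alg_eval a b p z = (\<Sum>w\<in>S. p w * alg_word a b w z)"
  unfolding alg_eval_def
  by (rule sum.mono_neutral_left) (use assms in \<open>auto simp: supp_def\<close>)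

lemma free_subalgebra2_if_leading_terms:
  fixes a b :: "'g::{group_add,linorder} \<Rightarrow> 'k::field" and \<tau> :: "bool list \<Rightarrow> 'g"
  assumes "inj \<tau>"
    and "\<And>w. alg_word a b w (\<tau> w) \<noteq> 0"
    and "\<And>w. supp (alg_word a b w) \<subseteq> {..\<tau> w}"
  shows "free_subalgebra2 a b"
  unfolding free_subalgebra2_def
proof (intro allI impI)
  fix p q :: "bool list \<Rightarrow> 'k"
  assume "finite (supp p)" "finite (supp q)" and eq: "alg_eval a b p = alg_eval a b q"
  define S where "S = supp p \<union> supp q"
  have fin: "finite S"
    using \<open>finite (supp p)\<close> \<open>finite (supp q)\<close> by (simp add: S_def)
  have zero: "(\<Sum>w\<in>S. (p w - q w) * alg_word a b w z) = 0" for z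
    using fun_cong[OF eq, of z]
    by (simp add: alg_eval_eq_sum[OF fin] S_def sum_subtractf left_diff_distrib)
  have "p w = q w" if "w \<in> S" for w
    using leading_terms_linear_independent[where c = "\<lambda>w. p w - q w",
        OF fin inj_on_subset[OF assms(1) subset_UNIV] assms(2,3) zero that]
    by simp
  moreover have "p w = q w" if "w \<notin> S" for w
    using that by (simp add: S_def supp_def)
  ultimately show "p = q" by blast
qed

theorem mainTheorem4:
  fixes x y :: "'g::{group_add,linorder}"
  assumes "ordered_group TYPE('g)"
    and "x \<noteq> y" and "0 < x" and "0 < y"
    and "free_submonoid2 x y"
  shows "free_subalgebra2
           (gadd (gdelta x) (gdelta (- x)) :: 'g \<Rightarrow> 'k::field)
           (gadd (gdelta y) (gdelta (- y)))"
proof (rule free_subalgebra2_if_leading_terms)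
  show "inj (word_val x y)"
    using assms(5) by (simp add: free_submonoid2_def)
  show "alg_word (gadd (gdelta x) (gdelta (- x))) (gadd (gdelta y) (gdelta (- y))) w
          (word_val x y w) \<noteq> (0 :: 'k)"
   and "supp (alg_word (gadd (gdelta x) (gdelta (- x)) :: 'g \<Rightarrow> 'k)
          (gadd (gdelta y) (gdelta (- y))) w) \<subseteq> {..word_val x y w}" for w
    using alg_word_sym_leading[OF assms(1,3,4), where 'k = 'k] by auto
qed

end
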